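(* Let $M$ be a finitely generated monoid. Then the number of ends of $M$ with respect to a finite generating set does not depend on the choice of finite generating set.
   Context: For a monoid $M$ generated by a finite set $X$, the right Cayley graph is the directed graph with vertex set $M$ and an edge labelled $a$ from $m$ to $ma$ for each $m\in M$, $a\in X$. The number of ends of $M$ with respect to $X$ is the supremum, over all finite sets $F$ of vertices, of the number of infinite connected components of the graph obtained by deleting $F$ from the underlying undirected graph of the right Cayley graph. *)

theory Defs
  imports Main "HOL-Library.Extended_Nat"
begin

text \<open>A monoid is modelled by a type of class monoid_mult (carrier = UNIV).\<close>

definition generates :: "'a::monoid_mult set \<Rightarrow> bool" where
  "generates X \<longleftrightarrow> (\<forall>m. \<exists>xs. set xs \<subseteq> X \<and> m = prod_list xs)"

text \<open>Underlying undirected graph of the right Cayley graph: an edge m -- m*a for a in X.\<close>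
definition cayley_adj :: "'a::monoid_mult set \<Rightarrow> 'a \<Rightarrow> 'a \<Rightarrow> bool" where
  "cayley_adj X u v \<longleftrightarrow> (\<exists>a\<in>X. v = u * a \<or> u = v * a)"

definition del_edges :: "'a::monoid_mult set \<Rightarrow> 'a set \<Rightarrow> ('a \<times> 'a) set" where
  "del_edges X F = {(u, v). u \<notin> F \<and> v \<notin> F \<and> cayley_adj X u v}"

definition component :: "'a::monoid_mult set \<Rightarrow> 'a set \<Rightarrow> 'a \<Rightarrow> 'a set" where
  "component X F v = {w. (v, w) \<in> (del_edges X F)\<^sup>*}"

definition infinite_components :: "'a::monoid_mult set \<Rightarrow> 'a set \<Rightarrow> 'a set set" where
  "infinite_components X F = {C. \<exists>v. v \<notin> F \<and> C = component X F v \<and> infinite C}"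

definition num_infinite_components :: "'a::monoid_mult set \<Rightarrow> 'a set \<Rightarrow> enat" where
  "num_infinite_components X F =
     (if finite (infinite_components X F) then enat (card (infinite_components X F)) else \<infinity>)"

definition num_ends :: "'a::monoid_mult set \<Rightarrow> enat" where
  "num_ends X = (SUP F \<in> {F. finite F}. num_infinite_components X F)"

end

theory Submission
  imports Defs
begin

text \<open>Fix for every y \<in> Y a word over X spelling y, let S be the finite set of products of
  suffixes of these words, and for finite F put G = F \<union> F S. An edge u -- u y of the Y-graph
  avoiding G is traced by the X-path spelling y from u, and this path avoids F: a vertex u p \<in> F
  on it, with p a prefix and s the remaining suffix, would give u y = u p s \<in> F S. So the
  components of the Y-graph outside G refine those of the X-graph outside F. There are only
  finitely many components (each is entered from the finite set {1} \<union> F X), so every infinite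
  X-component contains an infinite Y-component, and distinct X-components contain distinct ones.
  Hence the number of ends for X is at most that for Y, and equality follows by symmetry.\<close>

lemma sym_del_edges: "sym (del_edges X F)"
  by (auto simp: sym_def del_edges_def cayley_adj_def)

lemma rtrancl_del_edges_sym: "(u, v) \<in> (del_edges X F)\<^sup>* \<Longrightarrow> (v, u) \<in> (del_edges X F)\<^sup>*"
  using sym_rtrancl[OF sym_del_edges] by (auto dest: symD)

lemma component_eq: "w \<in> component X F v \<Longrightarrow> component X F w = component X F v"
  unfolding component_def using rtrancl_del_edges_sym by (blast intro: rtrancl_trans)

lemma component_eq_if_common_point:
  "w \<in> component X F u \<Longrightarrow> w \<in> component X F v \<Longrightarrow> component X F u = component X F v"
  by (metis component_eq)

lemma infinite_components_subset: "infinite_components X F \<subseteq> component X F ` (- F)"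
  by (auto simp: infinite_components_def)

lemma rtrancl_del_edges_prod_list:
  assumes "set w \<subseteq> X" and "\<And>i. i \<le> length w \<Longrightarrow> u * prod_list (take i w) \<notin> F"
  shows "(u, u * prod_list w) \<in> (del_edges X F)\<^sup>*"
  using assms
proof (induction w arbitrary: u)
  case Nil
  then show ?case by simp
next
  case (Cons a w)
  have "u \<notin> F" and "u * a \<notin> F"
    using Cons.prems(2)[of 0] Cons.prems(2)[of 1] by simp_all
  with Cons.prems(1) have edge: "(u, u * a) \<in> del_edges X F"
    by (auto simp: del_edges_def cayley_adj_def)
  have "u * a * prod_list (take i w) \<notin> F" if "i \<le> length w" for i
    using Cons.prems(2)[of "Suc i"] that by (simp add: mult.assoc)
  with Cons.prems(1) have "(u * a, u * a * prod_list w) \<in> (del_edges X F)\<^sup>*"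
    by (intro Cons.IH) auto
  with edge show ?case
    by (simp add: mult.assoc converse_rtrancl_into_rtrancl)
qed

lemma rtrancl_del_edges_from_entry:
  assumes "set w \<subseteq> X" and "prod_list w \<notin> F"
  shows "\<exists>e \<in> insert 1 {f * a | f a. f \<in> F \<and> a \<in> X} - F. (e, prod_list w) \<in> (del_edges X F)\<^sup>*"
  using assms
proof (induction w rule: rev_induct)
  case Nil
  then show ?case by auto
next
  case (snoc a w)
  show ?case
  proof (cases "prod_list w \<in> F")
    case True
    with snoc.prems show ?thesis by auto
  next
    case False
    with snoc obtain e where "e \<in> insert 1 {f * a | f a. f \<in> F \<and> a \<in> X} - F"
      and "(e, prod_list w) \<in> (del_edges X F)\<^sup>*" by auto
    moreover have "(prod_list w, prod_list (w @ [a])) \<in> del_edges X F"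
      using False snoc.prems by (auto simp: del_edges_def cayley_adj_def)
    ultimately show ?thesis by (meson rtrancl_into_rtrancl)
  qed
qed

lemma finite_components:
  assumes "finite X" and "generates X" and "finite F"
  shows "finite (component X F ` (- F))"
proof -
  let ?E = "insert 1 {f * a | f a. f \<in> F \<and> a \<in> X} - F"
  have "component X F ` (- F) \<subseteq> component X F ` ?E"
  proof
    fix C assume "C \<in> component X F ` (- F)"
    then obtain v where v: "v \<notin> F" "C = component X F v" by auto
    obtain w where "set w \<subseteq> X" "v = prod_list w"
      using assms(2) unfolding generates_def by blast
    with v obtain e where e: "e \<in> ?E" "(e, v) \<in> (del_edges X F)\<^sup>*"
      using rtrancl_del_edges_from_entry by blast
    then have "C = component X F e"
      using v component_eq[of v X F e] by (simp add: component_def)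
    with e(1) show "C \<in> component X F ` ?E" by blast
  qed
  moreover have "finite ?E"
    using assms by (auto intro: finite_image_set2)
  ultimately show ?thesis
    by (meson finite_imageI finite_subset)
qed

lemma infinite_component_contains_infinite_component:
  assumes "C \<in> infinite_components X F"
    and "finite G" and "finite (component Y G ` (- G))"
    and "\<And>v. component Y G v \<subseteq> component X F v"
  shows "\<exists>D \<in> infinite_components Y G. D \<subseteq> C"
proof -
  obtain v where v: "C = component X F v" "infinite C"
    using assms(1) by (auto simp: infinite_components_def)
  have "C - G \<subseteq> \<Union> (component Y G ` (C - G))"
    by (auto simp: component_def)
  moreover have "infinite (C - G)"
    using v(2) assms(2) by simp
  ultimately have "infinite (\<Union> (component Y G ` (C - G)))"
    using finite_subset by blast
  moreover have "finite (component Y G ` (C - G))"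
    using assms(3) by (rule finite_subset[rotated]) auto
  ultimately obtain w where w: "w \<in> C - G" "infinite (component Y G w)"
    by blast
  have "component Y G w \<subseteq> C"
    using assms(4)[of w] component_eq[of w X F v] w(1) v(1) by simp
  with w show ?thesis
    unfolding infinite_components_def by blast
qed

lemma num_infinite_components_le:
  assumes "finite G"
    and "finite (component X F ` (- F))" and "finite (component Y G ` (- G))"
    and "\<And>v. component Y G v \<subseteq> component X F v"
  shows "num_infinite_components X F \<le> num_infinite_components Y G"
proof -
  have fin_X: "finite (infinite_components X F)"
    and fin_Y: "finite (infinite_components Y G)"
    using assms(2,3) infinite_components_subset finite_subset by blast+
  have "card (infinite_components X F) \<le> card (infinite_components Y G)"
  proof (rule card_le_if_inj_on_rel[where r = "\<lambda>C D. D \<subseteq> C"])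
    show "\<And>C. C \<in> infinite_components X F \<Longrightarrow> \<exists>D. D \<in> infinite_components Y G \<and> D \<subseteq> C"
      using infinite_component_contains_infinite_component[OF _ assms(1,3,4)] by blast
  next
    fix C C' D
    assume C: "C \<in> infinite_components X F" "C' \<in> infinite_components X F"
      and D: "D \<in> infinite_components Y G" "D \<subseteq> C" "D \<subseteq> C'"
    obtain w where "w \<in> D"
      using D(1) by (fastforce simp: infinite_components_def)
    with C D show "C = C'"
      unfolding infinite_components_def using component_eq_if_common_point by blast
  qed (rule fin_Y)
  with fin_X fin_Y show ?thesis
    by (simp add: num_infinite_components_def)
qed

lemma del_edges_subset_rtrancl_del_edges:
  assumes "\<And>y. y \<in> Y \<Longrightarrow>
    \<exists>w. set w \<subseteq> X \<and> prod_list w = y \<and> (\<forall>i \<le> length w. prod_list (drop i w) \<in> S)"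
  shows "del_edges Y (F \<union> {f * s | f s. f \<in> F \<and> s \<in> S}) \<subseteq> (del_edges X F)\<^sup>*"
proof -
  let ?G = "F \<union> {f * s | f s. f \<in> F \<and> s \<in> S}"
  have step: "(u, u * y) \<in> (del_edges X F)\<^sup>*" if "y \<in> Y" "u * y \<notin> ?G" for u y
  proof -
    obtain w where w: "set w \<subseteq> X" "prod_list w = y" "\<forall>i \<le> length w. prod_list (drop i w) \<in> S"
      using assms \<open>y \<in> Y\<close> by blast
    have "u * prod_list (take i w) \<notin> F" if "i \<le> length w" for i
    proof
      assume "u * prod_list (take i w) \<in> F"
      moreover have "prod_list (drop i w) \<in> S"
        using w(3) that by blast
      ultimately have "u * prod_list (take i w) * prod_list (drop i w) \<in> ?G"
        by blast
      moreover have "u * prod_list (take i w) * prod_list (drop i w) = u * y"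
        using w(2) by (metis append_take_drop_id mult.assoc prod_list.append)
      ultimately show False
        using \<open>u * y \<notin> ?G\<close> by simp
    qed
    then have "(u, u * prod_list w) \<in> (del_edges X F)\<^sup>*"
      using w(1) by (rule rtrancl_del_edges_prod_list[rotated])
    with w(2) show ?thesis by simp
  qed
  show ?thesis
  proof clarify
    fix u v
    assume "(u, v) \<in> del_edges Y ?G"
    then obtain y where "y \<in> Y" "u \<notin> ?G" "v \<notin> ?G" "v = u * y \<or> u = v * y"
      by (auto simp: del_edges_def cayley_adj_def)
    then show "(u, v) \<in> (del_edges X F)\<^sup>*"
      using step[of y u] step[of y v] rtrancl_del_edges_sym by blast
  qed
qed

lemma component_subset_component:
  assumes "del_edges Y G \<subseteq> (del_edges X F)\<^sup>*"
  shows "component Y G v \<subseteq> component X F v"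
  using rtrancl_subset_rtrancl[OF assms] by (auto simp: component_def)

lemma finite_suffix_products:
  assumes "finite Y" and "generates X"
  obtains S where "finite S"
    and "\<And>y. y \<in> Y \<Longrightarrow>
      \<exists>w. set w \<subseteq> X \<and> prod_list w = y \<and> (\<forall>i \<le> length w. prod_list (drop i w) \<in> S)"
proof -
  obtain W where W: "\<And>y. set (W y) \<subseteq> X \<and> prod_list (W y) = y"
    using assms(2) unfolding generates_def by metis
  let ?S = "\<Union>y\<in>Y. (\<lambda>i. prod_list (drop i (W y))) ` {..length (W y)}"
  have "finite ?S"
    using assms(1) by simp
  moreover have "\<exists>w. set w \<subseteq> X \<and> prod_list w = y \<and> (\<forall>i \<le> length w. prod_list (drop i w) \<in> ?S)"
    if "y \<in> Y" for y
    using W that by blast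
  ultimately show ?thesis
    using that by blast
qed

lemma num_ends_le:
  fixes X Y :: "'a::monoid_mult set"
  assumes "finite X" and "generates X" and "finite Y" and "generates Y"
  shows "num_ends X \<le> num_ends Y"
  unfolding num_ends_def
proof (rule SUP_least)
  obtain S :: "'a set" where "finite S" and words:
    "\<And>y. y \<in> Y \<Longrightarrow>
      \<exists>w. set w \<subseteq> X \<and> prod_list w = y \<and> (\<forall>i \<le> length w. prod_list (drop i w) \<in> S)"
    using finite_suffix_products assms(2,3) by blast
  fix F :: "'a set"
  assume "F \<in> {F. finite F}"
  then have "finite F" by simp
  define G where "G = F \<union> {f * s | f s. f \<in> F \<and> s \<in> S}"
  have "finite G"
    using \<open>finite F\<close> \<open>finite S\<close> by (simp add: G_def finite_image_set2)
  have "num_infinite_components X F \<le> num_infinite_components Y G"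
  proof (rule num_infinite_components_le)
    show "finite (component X F ` (- F))" "finite (component Y G ` (- G))"
      using finite_components assms \<open>finite F\<close> \<open>finite G\<close> by blast+
    show "component Y G v \<subseteq> component X F v" for v
      unfolding G_def by (intro component_subset_component del_edges_subset_rtrancl_del_edges words)
  qed (rule \<open>finite G\<close>)
  also have "\<dots> \<le> (SUP G \<in> {G. finite G}. num_infinite_components Y G)"
    using \<open>finite G\<close> by (intro SUP_upper) simp
  finally show "num_infinite_components X F \<le> (SUP G \<in> {G. finite G}. num_infinite_components Y G)" .
qed

theorem corollary7p3:
  fixes X Y :: "'a::monoid_mult set"
  assumes "finite X" and "generates X"
      and "finite Y" and "generates Y"
  shows "num_ends X = num_ends Y"
  using num_ends_le[OF assms] num_ends_le[OF assms(3,4,1,2)] by (rule order_antisym)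

end
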